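(* Let $\phi$ be a $C^\infty$ homogeneous line bundle and $\mu\in M_\phi(\mathbb{R}^n,E)$. If $x\in\mathbb{R}^n$ and $\nu\in Tan^*(\mu,x)$, then $\nu\in\mathcal{S}'_\phi(\mathbb{R}^n)$, i.e. $\sum_{i=1}^m\langle\nu_i,\hat f_i\rangle=0$ for every $f=(f_1,\dots,f_m)\in\mathcal{S}_{\phi^\perp}(\mathbb{R}^n)$.
   Context: $E=\mathbb{C}^m$. A homogeneous line bundle is a continuous $\phi:\mathbb{R}^n\setminus\{0\}\to\mathbb{G}(1,E)$ with $\phi(a\xi)=\phi(\xi)$ for $a>0$; it is $C^\infty$ if locally $\phi(\xi)=\mathrm{span}\{e(\xi)\}$ with $e$ a $C^\infty$ unit vector field. $M_\phi(\mathbb{R}^n,E)$: finite $E$-valued Borel measures $\mu=(\mu_1,\dots,\mu_m)$ with $\hat\mu(\xi)\in\phi(\xi)$ for $\xi\neq0$, $\hat\mu_j(\xi)=\int e^{-2\pi i\langle\xi,x\rangle}d\mu_j$. $\mathcal{S}_{\phi^\perp}(\mathbb{R}^n)$ is the set of Schwartz functions $f=(f_1,\dots,f_m):\mathbb{R}^n\to E$ such that $\sum_i f_i(\xi)w_i=0$ for every $w\in\phi(\xi)$ and every $\xi\ne0$. $\mathcal{S}'_\phi(\mathbb{R}^n)$ is the set of $m$-tuples of tempered distributions $(\Lambda_1,\dots,\Lambda_m)$ with $\sum_i\langle\Lambda_i,\hat f_i\rangle=0$ for all $f\in\mathcal{S}_{\phi^\perp}(\mathbb{R}^n)$. Blow-up: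 $\mu_{x,r}(A)=\mu(x+rA)$. $Tan^*(\mu,x)$ is the set of ($E$-valued) tempered Radon measures $\nu$ for which there exist $r_j\downarrow0$ and $c_j>0$ with $c_j\mu_{x,r_j}\to\nu$ coordinatewise in $\mathcal{S}'(\mathbb{R}^n)$ (and weak-$*$ as Radon measures). *)

theory Defs
  imports "HOL-Analysis.Analysis"
begin

definition pderiv_dir :: "'n::finite \<Rightarrow> (real^'n \<Rightarrow> 'b::real_normed_vector) \<Rightarrow> real^'n \<Rightarrow> 'b" where
  "pderiv_dir i f x = vector_derivative (\<lambda>t. f (x + t *\<^sub>R axis i 1)) (at 0)"

definition iter_pderiv :: "'n::finite list \<Rightarrow> (real^'n \<Rightarrow> 'b::real_normed_vector) \<Rightarrow> real^'n \<Rightarrow> 'b" where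
  "iter_pderiv ds f = fold pderiv_dir ds f"

definition smooth_on :: "(real^'n::finite) set \<Rightarrow> (real^'n \<Rightarrow> 'b::real_normed_vector) \<Rightarrow> bool" where
  "smooth_on U f \<longleftrightarrow>
     (\<forall>ds. continuous_on U (iter_pderiv ds f) \<and>
       (\<forall>x\<in>U. \<forall>i. (\<lambda>t::real. iter_pderiv ds f (x + t *\<^sub>R axis i 1)) differentiable (at 0)))"

definition cline :: "complex^'m::finite \<Rightarrow> (complex^'m) set" where
  "cline e = {c *s e | c. True}"

text \<open>A C-infinity homogeneous line bundle phi : R^n minus 0 to G(1,E). Continuity is implied
  by the local smooth unit frame.\<close>
definition smooth_hom_line_bundle :: "(real^'n::finite \<Rightarrow> (complex^'m::finite) set) \<Rightarrow> bool" where
  "smooth_hom_line_bundle \<phi> \<longleftrightarrow>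
     (\<forall>\<xi>. \<xi> \<noteq> 0 \<longrightarrow> (\<exists>e. e \<noteq> 0 \<and> \<phi> \<xi> = cline e)) \<and>
     (\<forall>\<xi> a. \<xi> \<noteq> 0 \<longrightarrow> a > 0 \<longrightarrow> \<phi> (a *\<^sub>R \<xi>) = \<phi> \<xi>) \<and>
     (\<forall>\<xi>. \<xi> \<noteq> 0 \<longrightarrow> (\<exists>U e. open U \<and> \<xi> \<in> U \<and> 0 \<notin> U \<and> smooth_on U e \<and>
         (\<forall>\<zeta>\<in>U. norm (e \<zeta>) = 1 \<and> \<phi> \<zeta> = cline (e \<zeta>))))"

definition fourier_fun :: "(real^'n::finite \<Rightarrow> complex) \<Rightarrow> real^'n \<Rightarrow> complex" where
  "fourier_fun f x = (\<integral>\<xi>. exp (- (2 * pi * \<i>) * complex_of_real (x \<bullet> \<xi>)) * f \<xi> \<partial>lborel)"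

text \<open>A finite E-valued Borel measure is represented by a finite positive Borel measure M and
  an M-integrable density h with values in E: mu_j(A) = integral over A of h_j dM.\<close>
definition finite_vec_measure :: "(real^'n::finite) measure \<Rightarrow> (real^'n \<Rightarrow> complex^'m::finite) \<Rightarrow> bool" where
  "finite_vec_measure M h \<longleftrightarrow> sets M = sets borel \<and> finite_measure M \<and> integrable M h"

definition fourier_meas :: "(real^'n::finite) measure \<Rightarrow> (real^'n \<Rightarrow> complex^'m::finite) \<Rightarrow> real^'n \<Rightarrow> complex^'m" where
  "fourier_meas M h \<xi> = (\<chi> j. \<integral>x. exp (- (2 * pi * \<i>) * complex_of_real (\<xi> \<bullet> x)) * (h x $ j) \<partial>M)"

definition M_phi :: "(real^'n::finite \<Rightarrow> (complex^'m::finite) set) \<Rightarrow> (real^'n) measure \<Rightarrow> (real^'n \<Rightarrow> complex^'m) \<Rightarrow> bool" where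
  "M_phi \<phi> M h \<longleftrightarrow> finite_vec_measure M h \<and> (\<forall>\<xi>. \<xi> \<noteq> 0 \<longrightarrow> fourier_meas M h \<xi> \<in> \<phi> \<xi>)"

definition schwartz :: "(real^'n::finite \<Rightarrow> complex) \<Rightarrow> bool" where
  "schwartz f \<longleftrightarrow> smooth_on UNIV f \<and>
     (\<forall>(\<alpha>::'n \<Rightarrow> nat) ds. bounded (range (\<lambda>x. (\<Prod>i\<in>UNIV. (x $ i) ^ (\<alpha> i)) *\<^sub>R iter_pderiv ds f x)))"

definition S_phi_perp :: "(real^'n::finite \<Rightarrow> (complex^'m::finite) set) \<Rightarrow> ('m \<Rightarrow> real^'n \<Rightarrow> complex) \<Rightarrow> bool" where
  "S_phi_perp \<phi> f \<longleftrightarrow> (\<forall>i. schwartz (f i)) \<and>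
     (\<forall>\<xi> w. \<xi> \<noteq> 0 \<longrightarrow> w \<in> \<phi> \<xi> \<longrightarrow> (\<Sum>i\<in>UNIV. f i \<xi> * w $ i) = 0)"

text \<open>An E-valued Radon measure: a locally finite positive Borel measure N with a locally
  N-integrable E-valued density g.\<close>
definition vec_radon :: "(real^'n::finite) measure \<Rightarrow> (real^'n \<Rightarrow> complex^'m::finite) \<Rightarrow> bool" where
  "vec_radon N g \<longleftrightarrow> sets N = sets borel \<and> (\<forall>K. compact K \<longrightarrow> emeasure N K < \<infinity>) \<and>
     g \<in> borel_measurable N \<and> (\<forall>K. compact K \<longrightarrow> set_integrable N K g)"

definition compactly_supported_cont :: "(real^'n::finite \<Rightarrow> complex) \<Rightarrow> bool" where
  "compactly_supported_cont \<psi> \<longleftrightarrow> continuous_on UNIV \<psi> \<and> compact (closure {x. \<psi> x \<noteq> 0})"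

text \<open>Integral of psi against the blow-up mu_{x,r} (mu_{x,r}(A) = mu(x + rA)), j-th coordinate.\<close>
definition blowup_int :: "(real^'n::finite) measure \<Rightarrow> (real^'n \<Rightarrow> complex^'m::finite) \<Rightarrow> real^'n \<Rightarrow> real \<Rightarrow> 'm \<Rightarrow> (real^'n \<Rightarrow> complex) \<Rightarrow> complex" where
  "blowup_int M h x r j \<psi> = (\<integral>y. \<psi> ((1 / r) *\<^sub>R (y - x)) * (h y $ j) \<partial>M)"

text \<open>(N, g, Lam) in Tan_star M h x: the Radon measure nu = g N arises as the limit of
  c_k mu_{x,r_k} weak-* as Radon measures, and Lam is the tempered distribution (coordinatewise)
  that is the limit in S' of c_k mu_{x,r_k}, i.e. Lam j psi = <nu_j, psi> for Schwartz psi.\<close>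
definition Tan_star :: "(real^'n::finite) measure \<Rightarrow> (real^'n \<Rightarrow> complex^'m::finite) \<Rightarrow> real^'n
     \<Rightarrow> ((real^'n) measure \<times> (real^'n \<Rightarrow> complex^'m) \<times> ('m \<Rightarrow> (real^'n \<Rightarrow> complex) \<Rightarrow> complex)) set" where
  "Tan_star M h x = {(N, g, Lam). vec_radon N g \<and>
     (\<exists>r c :: nat \<Rightarrow> real. (\<forall>k. r k > 0) \<and> decseq r \<and> r \<longlonglongrightarrow> 0 \<and> (\<forall>k. c k > 0) \<and>
        (\<forall>j \<psi>. schwartz \<psi> \<longrightarrow>
            (\<lambda>k. complex_of_real (c k) * blowup_int M h x (r k) j \<psi>) \<longlonglongrightarrow> Lam j \<psi>) \<and>
        (\<forall>j \<psi>. compactly_supported_cont \<psi> \<longrightarrow>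
            (\<lambda>k. complex_of_real (c k) * blowup_int M h x (r k) j \<psi>) \<longlonglongrightarrow> (\<integral>y. \<psi> y * (g y $ j) \<partial>N)))}"

end

theory Submission
  imports Defs "HOL-Probability.Characteristic_Functions"
begin

text \<open>
  Let \<open>f \<in> S_phi_perp \<phi>\<close>. The Fourier transform maps Schwartz functions to Schwartz functions,
  so every \<open>fourier_fun (f i)\<close> is an admissible test function and \<open>\<Sum>i. Lam i (fourier_fun (f i))\<close>
  is the limit of \<open>c\<^sub>k \<Sum>i. blowup_int M h x r\<^sub>k i (fourier_fun (f i))\<close>. By Fubini,
  \<open>blowup_int M h x r i (fourier_fun (f i))\<close> is the integral over \<open>\<xi>\<close> of
  \<open>f i \<xi> \<cdot> (fourier_meas M h (\<xi> / r)) $ i\<close> times a unimodular factor, and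
  \<open>fourier_meas M h (\<xi> / r) \<in> \<phi> (\<xi> / r) = \<phi> \<xi>\<close> for \<open>\<xi> \<noteq> 0\<close> by homogeneity, so the sum over \<open>i\<close>
  vanishes pointwise and every term of the sequence is zero.

  Most of the work is the Schwartz property of the Fourier transform: differentiating under the
  integral sign turns \<open>\<partial>\<^sub>j\<close> of the transform into the transform of \<open>-2\<pi>i y\<^sub>j g\<close>, and the
  translation invariance of Lebesgue measure turns the transform of \<open>\<partial>\<^sub>j f\<close> into \<open>2\<pi>i \<xi>\<^sub>j\<close> times
  the transform of \<open>f\<close>. Integrability comes from the bound by \<open>\<Prod>i. 1 / (1 + y\<^sub>i\<^sup>2)\<close>.
\<close>

section \<open>Rapidly decreasing functions\<close>

lemma integrable_inverse_1_plus_square: "integrable lborel (\<lambda>t::real. 1 / (1 + t\<^sup>2))"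
proof -
  have "set_integrable lborel (einterval (-\<infinity>) \<infinity>) (\<lambda>t::real. 1 / (1 + t\<^sup>2))"
  proof (rule interval_integral_FTC_nonneg(1)[where F=arctan and A="-(pi/2)" and B="pi/2"])
    show "\<And>x. -\<infinity> < ereal x \<Longrightarrow> ereal x < \<infinity> \<Longrightarrow> DERIV arctan x :> 1 / (1 + x\<^sup>2)"
      by (auto intro!: derivative_eq_intros simp: power2_eq_square field_simps add_nonneg_eq_0_iff)
    show "\<And>x. isCont (\<lambda>t::real. 1 / (1 + t\<^sup>2)) x"
      by (auto intro!: continuous_intros simp: add_nonneg_eq_0_iff)
    show "((arctan \<circ> real_of_ereal) \<longlongrightarrow> - (pi / 2)) (at_right (- \<infinity>))"
      by (simp add: ereal_tendsto_simps tendsto_arctan_at_bot)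
    show "((arctan \<circ> real_of_ereal) \<longlongrightarrow> (pi / 2)) (at_left \<infinity>)"
      by (simp add: ereal_tendsto_simps tendsto_arctan_at_top)
  qed auto
  then show ?thesis by (simp add: einterval_def set_integrable_def)
qed

lemma inverse_1_plus_square_translate_le:
  fixes a s :: real
  assumes "\<bar>s\<bar> \<le> 1"
  shows "1 / (1 + (a + s)\<^sup>2) \<le> 3 / (1 + a\<^sup>2)"
proof -
  have "a\<^sup>2 \<le> 2 * (a + s)\<^sup>2 + 2 * s\<^sup>2"
    using sum_squares_ge_zero[of "a + 2 * s" 0] by (simp add: power2_eq_square algebra_simps)
  moreover have "s\<^sup>2 \<le> 1" using assms by (simp add: abs_square_le_1)
  moreover have "3 * (1 + (a + s)\<^sup>2) = 3 + 3 * (a + s)\<^sup>2" by simp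
  ultimately have "1 + a\<^sup>2 \<le> 3 * (1 + (a + s)\<^sup>2)"
    using zero_le_power2[of "a + s"] by linarith
  then show ?thesis
    by (simp add: field_simps add_pos_nonneg)
qed

definition cauchy_weight :: "real^'n::finite \<Rightarrow> real" where
  "cauchy_weight x = (\<Prod>i\<in>UNIV. 1 / (1 + (x$i)\<^sup>2))"

lemma cauchy_weight_pos: "cauchy_weight x > 0"
  unfolding cauchy_weight_def by (intro prod_pos) (auto simp: add_pos_nonneg)

lemma cauchy_weight_measurable [measurable]: "cauchy_weight \<in> borel_measurable borel"
  unfolding cauchy_weight_def by measurable

lemma prod_Basis_cart: "(\<Prod>b\<in>(Basis :: (real^'n::finite) set). g (x \<bullet> b)) = (\<Prod>i\<in>UNIV. g (x $ i))"
proof -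
  have Basis_eq: "(Basis :: (real^'n) set) = range (\<lambda>i. axis i 1)"
    by (auto simp: Basis_vec_def)
  show ?thesis
    unfolding Basis_eq by (subst prod.reindex) (auto simp: inj_on_def axis_eq_axis inner_axis)
qed

lemma integrable_cauchy_weight: "integrable lborel (cauchy_weight :: real^'n::finite \<Rightarrow> real)"
proof -
  have "(\<integral>\<^sup>+t. ennreal (1 / (1 + t\<^sup>2)) \<partial>lborel) < \<infinity>"
    using integrable_inverse_1_plus_square unfolding integrable_iff_bounded by simp
  moreover have "(\<integral>\<^sup>+x. ennreal (cauchy_weight x) \<partial>(lborel :: (real^'n) measure)) =
        (\<integral>\<^sup>+x. (\<Prod>b\<in>(Basis :: (real^'n) set). ennreal (1 / (1 + (x \<bullet> b)\<^sup>2))) \<partial>lborel)"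
    unfolding cauchy_weight_def prod_Basis_cart[where g="\<lambda>t. ennreal (1 / (1 + t\<^sup>2))", symmetric]
    by (simp add: prod_ennreal add_pos_nonneg prod_Basis_cart[where g="\<lambda>t. (1 / (1 + t\<^sup>2))"])
  moreover have "\<dots> = (\<Prod>b\<in>(Basis :: (real^'n) set). \<integral>\<^sup>+t. ennreal (1 / (1 + t\<^sup>2)) \<partial>lborel)"
    by (rule nn_integral_lborel_prod) auto
  ultimately have "(\<integral>\<^sup>+x. ennreal (cauchy_weight x) \<partial>(lborel :: (real^'n) measure)) < \<infinity>"
    by (simp add: less_top[symmetric] ennreal_prod_eq_top power_eq_top_ennreal)
  then show ?thesis
    unfolding integrable_iff_bounded by (simp add: less_imp_le cauchy_weight_pos)
qed

lemma cauchy_weight_translate_le: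
  assumes "\<bar>s\<bar> \<le> 1"
  shows "cauchy_weight (y + s *\<^sub>R axis j 1) \<le> 3 * cauchy_weight (y::real^'n::finite)"
proof -
  have "cauchy_weight (y + s *\<^sub>R axis j 1) = (\<Prod>i\<in>UNIV. 1 / (1 + (y $ i + s * (if j = i then 1 else 0))\<^sup>2))"
    unfolding cauchy_weight_def by (intro prod.cong refl) (simp add: axis_def)
  also have "\<dots> \<le> (\<Prod>i\<in>UNIV. (if j = i then 3 else 1) * (1 / (1 + (y $ i)\<^sup>2)))"
    by (intro prod_mono) (auto simp: add_pos_nonneg inverse_1_plus_square_translate_le[OF assms])
  also have "\<dots> = 3 * cauchy_weight y"
    unfolding cauchy_weight_def prod.distrib by simp
  finally show ?thesis .
qed

definition monomial :: "('n::finite \<Rightarrow> nat) \<Rightarrow> real^'n \<Rightarrow> real" where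
  "monomial \<alpha> x = (\<Prod>i\<in>UNIV. (x$i) ^ (\<alpha> i))"

definition rapid_decay :: "(real^'n::finite \<Rightarrow> complex) \<Rightarrow> bool" where
  "rapid_decay g \<longleftrightarrow> g \<in> borel_measurable borel \<and> (\<forall>\<alpha>. \<exists>B. \<forall>x. norm (monomial \<alpha> x *\<^sub>R g x) \<le> B)"

lemma monomial_mult: "monomial \<alpha> x * monomial \<beta> x = monomial (\<lambda>i. \<alpha> i + \<beta> i) x"
  unfolding monomial_def by (simp add: prod.distrib[symmetric] power_add)

lemma coordinate_eq_monomial: "x $ j = monomial (\<lambda>i. if i = j then 1 else 0) x"
proof -
  have "monomial (\<lambda>i. if i = j then 1 else 0) x = (\<Prod>i\<in>UNIV. if i = j then x$i else 1)"
    unfolding monomial_def by (intro prod.cong) auto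
  then show ?thesis by simp
qed

lemma rapid_decay_measurable: "rapid_decay g \<Longrightarrow> g \<in> borel_measurable borel"
  by (simp add: rapid_decay_def)

text \<open>Expanding \<open>\<Prod>i. 1 + y\<^sub>i\<^sup>2\<close> into the monomials \<open>\<Prod>i\<in>X. y\<^sub>i\<^sup>2\<close>, \<open>X \<subseteq> UNIV\<close>.\<close>
lemma rapid_decay_le_cauchy_weight:
  fixes g :: "real^'n::finite \<Rightarrow> complex"
  assumes "rapid_decay g"
  shows "\<exists>C. \<forall>x. norm (g x) \<le> C * cauchy_weight x"
proof -
  define \<alpha> :: "'n set \<Rightarrow> 'n \<Rightarrow> nat" where "\<alpha> X = (\<lambda>i::'n. if i \<in> X then 2 else (0::nat))" for X
  have "\<forall>X. \<exists>B. \<forall>x. norm (monomial (\<alpha> X) x *\<^sub>R g x) \<le> B"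
    using assms unfolding rapid_decay_def by blast
  then obtain B where B: "\<And>X x. norm (monomial (\<alpha> X) x *\<^sub>R g x) \<le> B X"
    by metis
  have expand: "(\<Prod>i\<in>UNIV. 1 + (x$i)\<^sup>2) = (\<Sum>X\<in>Pow UNIV. monomial (\<alpha> X) x)" for x
  proof -
    have "(\<Prod>i\<in>UNIV. 1 + (x$i)\<^sup>2) = (\<Sum>X\<in>Pow UNIV. (\<Prod>i\<in>X. (x$i)\<^sup>2) * (\<Prod>i\<in>UNIV - X. 1))"
      using prod_add[of UNIV "\<lambda>i. (x$i)\<^sup>2" "\<lambda>_. 1"] by (simp add: add.commute)
    also have "\<dots> = (\<Sum>X\<in>Pow UNIV. monomial (\<alpha> X) x)"
    proof (intro sum.cong refl)
      fix X :: "'n set"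
      have "monomial (\<alpha> X) x = (\<Prod>i\<in>UNIV. if i \<in> X then (x$i)\<^sup>2 else 1)"
        unfolding monomial_def \<alpha>_def by (intro prod.cong) auto
      also have "\<dots> = (\<Prod>i\<in>UNIV \<inter> X. (x$i)\<^sup>2)"
        by (rule prod.inter_restrict[symmetric]) simp
      finally show "(\<Prod>i\<in>X. (x$i)\<^sup>2) * (\<Prod>i\<in>UNIV - X. 1) = monomial (\<alpha> X) x" by simp
    qed
    finally show ?thesis .
  qed
  have monomial_nonneg: "monomial (\<alpha> X) x \<ge> 0" for X x
    unfolding monomial_def \<alpha>_def by (intro prod_nonneg) auto
  show ?thesis
  proof (intro exI allI)
    fix x :: "real^'n"
    have pos: "(\<Prod>i\<in>UNIV. 1 + (x$i)\<^sup>2) > 0" by (intro prod_pos) (auto simp: add_pos_nonneg)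
    have "norm (g x) * (\<Prod>i\<in>UNIV. 1 + (x$i)\<^sup>2) = (\<Sum>X\<in>Pow UNIV. norm (monomial (\<alpha> X) x *\<^sub>R g x))"
      by (simp add: expand sum_distrib_left monomial_nonneg mult.commute)
    also have "\<dots> \<le> (\<Sum>X\<in>Pow UNIV. B X)" by (intro sum_mono B)
    finally have "norm (g x) \<le> (\<Sum>X\<in>Pow UNIV. B X) / (\<Prod>i\<in>UNIV. 1 + (x$i)\<^sup>2)"
      using pos by (simp add: field_simps)
    also have "\<dots> = (\<Sum>X\<in>Pow UNIV. B X) * cauchy_weight x"
      unfolding cauchy_weight_def by (simp add: prod_dividef)
    finally show "norm (g x) \<le> (\<Sum>X\<in>Pow UNIV. B X) * cauchy_weight x" .
  qed
qed

lemma integrable_rapid_decay: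
  assumes "rapid_decay g"
  shows "integrable lborel g"
proof -
  obtain C where C: "\<And>x. norm (g x) \<le> C * cauchy_weight x"
    using rapid_decay_le_cauchy_weight[OF assms] by blast
  show ?thesis
  proof (rule Bochner_Integration.integrable_bound[where f="\<lambda>x. C * cauchy_weight x"])
    show "integrable lborel (\<lambda>x. C * cauchy_weight x)"
      by (intro integrable_mult_right integrable_cauchy_weight)
    show "g \<in> borel_measurable lborel" using rapid_decay_measurable[OF assms] by simp
    show "AE x in lborel. norm (g x) \<le> norm (C * cauchy_weight x)"
      using C by (auto intro: order_trans[OF _ abs_ge_self])
  qed
qed

lemma rapid_decay_cmult:
  assumes "rapid_decay g"
  shows "rapid_decay (\<lambda>x. c * g x)"
  unfolding rapid_decay_def
proof (intro conjI allI)
  show "(\<lambda>x. c * g x) \<in> borel_measurable borel"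
    using rapid_decay_measurable[OF assms] by measurable
  fix \<alpha>
  obtain B where "\<forall>x. norm (monomial \<alpha> x *\<^sub>R g x) \<le> B"
    using assms unfolding rapid_decay_def by blast
  then show "\<exists>B. \<forall>x. norm (monomial \<alpha> x *\<^sub>R (c * g x)) \<le> B"
    by (intro exI[of _ "norm c * B"]) (auto simp: norm_mult mult.left_commute intro: mult_left_mono)
qed

lemma rapid_decay_monomial_mult:
  assumes "rapid_decay g"
  shows "rapid_decay (\<lambda>x. complex_of_real (monomial \<beta> x) * g x)"
  unfolding rapid_decay_def
proof (intro conjI allI)
  have [measurable]: "g \<in> borel_measurable borel" using rapid_decay_measurable[OF assms] .
  show "(\<lambda>x. complex_of_real (monomial \<beta> x) * g x) \<in> borel_measurable borel"
    unfolding monomial_def by measurable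
  fix \<alpha>
  obtain B where "\<forall>x. norm (monomial (\<lambda>i. \<alpha> i + \<beta> i) x *\<^sub>R g x) \<le> B"
    using assms unfolding rapid_decay_def by blast
  then show "\<exists>B. \<forall>x. norm (monomial \<alpha> x *\<^sub>R (complex_of_real (monomial \<beta> x) * g x)) \<le> B"
    by (intro exI[of _ B]) (simp add: monomial_mult[symmetric] norm_mult abs_mult mult.assoc)
qed

lemma rapid_decay_coordinate_mult:
  assumes "rapid_decay g"
  shows "rapid_decay (\<lambda>x. complex_of_real (x $ j) * g x)"
  using rapid_decay_monomial_mult[OF assms, of "\<lambda>i. if i = j then 1 else 0"]
  by (simp add: coordinate_eq_monomial[symmetric])

section \<open>Partial derivatives and the Schwartz class\<close>

lemma iter_pderiv_Nil [simp]: "iter_pderiv [] f = f"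
  by (simp add: iter_pderiv_def)

lemma iter_pderiv_Cons: "iter_pderiv (d # ds) f = iter_pderiv ds (pderiv_dir d f)"
  by (simp add: iter_pderiv_def)

lemma iter_pderiv_append: "iter_pderiv (ds @ es) f = iter_pderiv es (iter_pderiv ds f)"
  by (simp add: iter_pderiv_def)

lemma iter_pderiv_snoc: "iter_pderiv (ds @ [d]) f = pderiv_dir d (iter_pderiv ds f)"
  by (simp add: iter_pderiv_def)

lemma smooth_on_iter_pderiv:
  assumes "smooth_on U f"
  shows "smooth_on U (iter_pderiv ds f)"
  using assms unfolding smooth_on_def iter_pderiv_append[symmetric] by blast

lemma smooth_on_pderiv_dir:
  assumes "smooth_on U f"
  shows "smooth_on U (pderiv_dir j f)"
  using smooth_on_iter_pderiv[OF assms, of "[j]"] by (simp add: iter_pderiv_def)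

lemma smooth_on_imp_continuous_on:
  assumes "smooth_on U f"
  shows "continuous_on U f"
  using assms unfolding smooth_on_def by (metis iter_pderiv_Nil)

lemma smooth_on_has_vector_derivative:
  assumes "smooth_on U f" "x \<in> U"
  shows "((\<lambda>t. f (x + t *\<^sub>R axis j 1)) has_vector_derivative pderiv_dir j f x) (at 0)"
proof -
  have "(\<lambda>t. f (x + t *\<^sub>R axis j 1)) differentiable (at 0)"
    using assms unfolding smooth_on_def by (metis iter_pderiv_Nil)
  then show ?thesis unfolding pderiv_dir_def by (simp add: vector_derivative_works)
qed

lemma has_vector_derivative_at_shift:
  fixes g :: "real \<Rightarrow> 'b::real_normed_vector"
  assumes "((\<lambda>t. g (s + t)) has_vector_derivative D) (at 0)"
  shows "(g has_vector_derivative D) (at s)"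
proof -
  have "((\<lambda>t. t - s) has_vector_derivative 1) (at s)"
    by (auto intro!: derivative_eq_intros)
  then have "(((\<lambda>t. g (s + t)) \<circ> (\<lambda>t. t - s)) has_vector_derivative (1 *\<^sub>R D)) (at s)"
    by (rule vector_diff_chain_at) (use assms in simp)
  then show ?thesis by (simp add: o_def)
qed

lemma smooth_on_UNIV_has_vector_derivative:
  assumes "smooth_on UNIV f"
  shows "((\<lambda>t. f (x + t *\<^sub>R axis j 1)) has_vector_derivative pderiv_dir j f (x + s *\<^sub>R axis j 1)) (at s)"
proof (rule has_vector_derivative_at_shift)
  have "((\<lambda>t. f ((x + s *\<^sub>R axis j 1) + t *\<^sub>R axis j 1)) has_vector_derivative
          pderiv_dir j f (x + s *\<^sub>R axis j 1)) (at 0)"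
    by (rule smooth_on_has_vector_derivative[OF assms]) simp
  then show "((\<lambda>t. f (x + (s + t) *\<^sub>R axis j 1)) has_vector_derivative
          pderiv_dir j f (x + s *\<^sub>R axis j 1)) (at 0)"
    by (simp add: scaleR_add_left add.assoc)
qed

lemma pderiv_dir_eqI:
  assumes "\<And>x. ((\<lambda>t. g (x + t *\<^sub>R axis j 1)) has_vector_derivative D x) (at 0)"
  shows "pderiv_dir j g = D"
  using assms unfolding pderiv_dir_def by (simp add: fun_eq_iff vector_derivative_at)

lemma schwartz_smooth: "schwartz f \<Longrightarrow> smooth_on UNIV f"
  by (simp add: schwartz_def)

lemma schwartz_bounded:
  assumes "schwartz f"
  shows "\<exists>B. \<forall>x. norm (monomial \<alpha> x *\<^sub>R iter_pderiv ds f x) \<le> B"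
  using assms unfolding schwartz_def bounded_iff monomial_def by blast

lemma schwartz_iter_pderiv:
  assumes "schwartz f"
  shows "schwartz (iter_pderiv ds f)"
  using assms unfolding schwartz_def
  by (auto simp: smooth_on_iter_pderiv iter_pderiv_append[symmetric])

lemma schwartz_pderiv_dir:
  assumes "schwartz f"
  shows "schwartz (pderiv_dir j f)"
  using schwartz_iter_pderiv[OF assms, of "[j]"] by (simp add: iter_pderiv_def)

lemma schwartz_continuous: "schwartz f \<Longrightarrow> continuous_on UNIV f"
  using schwartz_smooth smooth_on_imp_continuous_on by blast

lemma schwartz_rapid_decay: "schwartz f \<Longrightarrow> rapid_decay f"
  unfolding rapid_decay_def
  using schwartz_continuous borel_measurable_continuous_onI schwartz_bounded[of f _ "[]"] by auto

lemma iter_pderiv_cmult: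
  fixes f :: "real^'n::finite \<Rightarrow> complex"
  assumes "smooth_on UNIV f"
  shows "iter_pderiv ds (\<lambda>x. c * f x) = (\<lambda>x. c * iter_pderiv ds f x)"
  using assms
proof (induction ds arbitrary: f)
  case Nil then show ?case by simp
next
  case (Cons d ds)
  have "pderiv_dir d (\<lambda>x. c * f x) = (\<lambda>x. c * pderiv_dir d f x)"
    by (intro pderiv_dir_eqI has_vector_derivative_mult_right
        smooth_on_has_vector_derivative[OF Cons.prems]) simp
  then show ?case
    by (simp add: iter_pderiv_Cons Cons.IH smooth_on_pderiv_dir Cons.prems)
qed

lemma schwartz_cmult:
  fixes f :: "real^'n::finite \<Rightarrow> complex"
  assumes "schwartz f"
  shows "schwartz (\<lambda>x. c * f x)"
proof -
  have smooth: "smooth_on UNIV f" using assms by (rule schwartz_smooth)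
  have "smooth_on UNIV (\<lambda>x. c * f x)"
    unfolding smooth_on_def iter_pderiv_cmult[OF smooth]
  proof (intro allI conjI ballI)
    fix ds x i
    have "continuous_on UNIV (iter_pderiv ds f)"
      by (rule smooth_on_imp_continuous_on[OF smooth_on_iter_pderiv[OF smooth]])
    then show "continuous_on UNIV (\<lambda>x. c * iter_pderiv ds f x)"
      by (intro continuous_intros) (simp add: eta_contract_eq)
    have "((\<lambda>t. c * iter_pderiv ds f (x + t *\<^sub>R axis i 1)) has_vector_derivative
            c * pderiv_dir i (iter_pderiv ds f) x) (at 0)"
      by (intro has_vector_derivative_mult_right
          smooth_on_has_vector_derivative[OF smooth_on_iter_pderiv[OF smooth]]) simp
    then show "(\<lambda>t. c * iter_pderiv ds f (x + t *\<^sub>R axis i 1)) differentiable at 0"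
      by (rule differentiableI_vector)
  qed
  moreover have "\<exists>B. \<forall>x. norm (monomial \<alpha> x *\<^sub>R iter_pderiv ds (\<lambda>x. c * f x) x) \<le> B" for \<alpha> ds
  proof -
    obtain B where "\<forall>x. norm (monomial \<alpha> x *\<^sub>R iter_pderiv ds f x) \<le> B"
      using schwartz_bounded[OF assms] by blast
    then show ?thesis
      unfolding iter_pderiv_cmult[OF smooth]
      by (intro exI[of _ "norm c * B"]) (auto simp: norm_mult mult.left_commute intro: mult_left_mono)
  qed
  ultimately show ?thesis
    unfolding schwartz_def bounded_iff monomial_def[symmetric] by blast
qed

lemma has_vector_derivative_coordinate_mult_line:
  fixes f :: "real^'n::finite \<Rightarrow> complex"
  assumes "smooth_on UNIV f"
  shows "((\<lambda>t. complex_of_real ((x + t *\<^sub>R axis i 1) $ j) * iter_pderiv ds f (x + t *\<^sub>R axis i 1)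
              + (\<Sum>k<K. iter_pderiv (E k) f (x + t *\<^sub>R axis i 1)))
          has_vector_derivative
          ((if i = j then iter_pderiv ds f x else 0) + complex_of_real (x $ j) * pderiv_dir i (iter_pderiv ds f) x
              + (\<Sum>k<K. pderiv_dir i (iter_pderiv (E k) f) x))) (at 0)"
proof -
  have deriv: "((\<lambda>t. iter_pderiv es f (x + t *\<^sub>R axis i 1)) has_vector_derivative
                  pderiv_dir i (iter_pderiv es f) x) (at 0)" for es
    using smooth_on_has_vector_derivative[OF smooth_on_iter_pderiv[OF assms, of es], of x i] by simp
  have line: "(x + t *\<^sub>R axis i 1) $ j = x $ j + t * (if i = j then 1 else 0)" for t
    by (simp add: axis_def)
  have coord: "((\<lambda>t. complex_of_real ((x + t *\<^sub>R axis i 1) $ j)) has_vector_derivative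
            complex_of_real (if i = j then 1 else 0)) (at 0)"
    unfolding line by (rule has_vector_derivative_of_real) (auto intro!: derivative_eq_intros)
  have "((\<lambda>t. complex_of_real ((x + t *\<^sub>R axis i 1) $ j) * iter_pderiv ds f (x + t *\<^sub>R axis i 1)
              + (\<Sum>k<K. iter_pderiv (E k) f (x + t *\<^sub>R axis i 1)))
          has_vector_derivative
          (complex_of_real ((x + 0 *\<^sub>R axis i 1) $ j) * pderiv_dir i (iter_pderiv ds f) x
             + complex_of_real (if i = j then 1 else 0) * iter_pderiv ds f (x + 0 *\<^sub>R axis i 1)
              + (\<Sum>k<K. pderiv_dir i (iter_pderiv (E k) f) x))) (at 0)"
    by (intro has_vector_derivative_add has_vector_derivative_mult[OF coord deriv]
        has_vector_derivative_sum deriv)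
  then show ?thesis
    by (rule has_vector_derivative_eq_rhs) (auto simp: algebra_simps)
qed

text \<open>Leibniz rule for \<open>y\<^sub>j f\<close>: the lower order terms are again derivatives of \<open>f\<close>.\<close>
lemma iter_pderiv_coordinate_mult:
  fixes f :: "real^'n::finite \<Rightarrow> complex"
  assumes "smooth_on UNIV f"
  shows "\<exists>(K::nat) E. iter_pderiv ds (\<lambda>x. complex_of_real (x $ j) * f x) =
            (\<lambda>x. complex_of_real (x $ j) * iter_pderiv ds f x + (\<Sum>k<K. iter_pderiv (E k) f x))"
proof (induction ds rule: rev_induct)
  case Nil
  show ?case by (rule exI[of _ "0::nat"], rule exI[of _ "\<lambda>k. []"]) simp
next
  case (snoc d ds)
  then obtain K :: nat and E where KE: "iter_pderiv ds (\<lambda>x. complex_of_real (x $ j) * f x) =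
            (\<lambda>x. complex_of_real (x $ j) * iter_pderiv ds f x + (\<Sum>k<K. iter_pderiv (E k) f x))"
    by blast
  have pd: "iter_pderiv (ds @ [d]) (\<lambda>x. complex_of_real (x $ j) * f x) =
      (\<lambda>x. (if d = j then iter_pderiv ds f x else 0) + complex_of_real (x $ j) * pderiv_dir d (iter_pderiv ds f) x
              + (\<Sum>k<K. pderiv_dir d (iter_pderiv (E k) f) x))"
    unfolding iter_pderiv_snoc KE
    by (rule pderiv_dir_eqI) (rule has_vector_derivative_coordinate_mult_line[OF assms])
  define K' where "K' = K + (if d = j then 1 else 0)"
  define E' where "E' k = (if k < K then E k @ [d] else ds)" for k
  have "(\<Sum>k<K'. iter_pderiv (E' k) f x) = (if d = j then iter_pderiv ds f x else 0)
          + (\<Sum>k<K. pderiv_dir d (iter_pderiv (E k) f) x)" for x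
  proof -
    have "(\<Sum>k<K. iter_pderiv (E' k) f x) = (\<Sum>k<K. pderiv_dir d (iter_pderiv (E k) f) x)"
      by (intro sum.cong) (auto simp: E'_def iter_pderiv_snoc)
    then show ?thesis
      by (auto simp: K'_def E'_def)
  qed
  then have "iter_pderiv (ds @ [d]) (\<lambda>x. complex_of_real (x $ j) * f x) =
            (\<lambda>x. complex_of_real (x $ j) * iter_pderiv (ds @ [d]) f x + (\<Sum>k<K'. iter_pderiv (E' k) f x))"
    unfolding pd by (auto simp: iter_pderiv_snoc fun_eq_iff algebra_simps)
  then show ?case by blast
qed

lemma smooth_on_coordinate_mult:
  fixes f :: "real^'n::finite \<Rightarrow> complex"
  assumes "smooth_on UNIV f"
  shows "smooth_on UNIV (\<lambda>x. complex_of_real (x $ j) * f x)"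
  unfolding smooth_on_def
proof (intro allI conjI ballI)
  fix ds x i
  obtain K :: nat and E where KE: "iter_pderiv ds (\<lambda>x. complex_of_real (x $ j) * f x) =
            (\<lambda>x. complex_of_real (x $ j) * iter_pderiv ds f x + (\<Sum>k<K. iter_pderiv (E k) f x))"
    using iter_pderiv_coordinate_mult[OF assms] by blast
  have "continuous_on UNIV (\<lambda>x. iter_pderiv es f x)" for es
    using smooth_on_imp_continuous_on[OF smooth_on_iter_pderiv[OF assms, of es]]
    by (simp add: eta_contract_eq)
  then show "continuous_on UNIV (iter_pderiv ds (\<lambda>x. complex_of_real (x $ j) * f x))"
    unfolding KE by (intro continuous_intros)
  show "(\<lambda>t. iter_pderiv ds (\<lambda>x. complex_of_real (x $ j) * f x) (x + t *\<^sub>R axis i 1)) differentiable at 0"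
    unfolding KE
    by (rule differentiableI_vector[OF has_vector_derivative_coordinate_mult_line[OF assms]])
qed

lemma schwartz_coordinate_mult:
  fixes f :: "real^'n::finite \<Rightarrow> complex"
  assumes "schwartz f"
  shows "schwartz (\<lambda>x. complex_of_real (x $ j) * f x)"
proof -
  have smooth: "smooth_on UNIV f" using assms by (rule schwartz_smooth)
  obtain B where B: "\<And>\<beta> es x. norm (monomial \<beta> x *\<^sub>R iter_pderiv es f x) \<le> B \<beta> es"
    using schwartz_bounded[OF assms] by metis
  have "\<exists>C. \<forall>x. norm (monomial \<alpha> x *\<^sub>R iter_pderiv ds (\<lambda>x. complex_of_real (x $ j) * f x) x) \<le> C"
    for \<alpha> ds
  proof -
    obtain K :: nat and E where KE: "iter_pderiv ds (\<lambda>x. complex_of_real (x $ j) * f x) =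
            (\<lambda>x. complex_of_real (x $ j) * iter_pderiv ds f x + (\<Sum>k<K. iter_pderiv (E k) f x))"
      using iter_pderiv_coordinate_mult[OF smooth] by blast
    define \<beta> where "\<beta> = (\<lambda>i. \<alpha> i + (if i = j then 1 else 0))"
    have "norm (monomial \<alpha> x *\<^sub>R iter_pderiv ds (\<lambda>x. complex_of_real (x $ j) * f x) x)
            \<le> B \<beta> ds + (\<Sum>k<K. B \<alpha> (E k))" for x
    proof -
      have "monomial \<alpha> x *\<^sub>R iter_pderiv ds (\<lambda>x. complex_of_real (x $ j) * f x) x
            = monomial \<beta> x *\<^sub>R iter_pderiv ds f x + (\<Sum>k<K. monomial \<alpha> x *\<^sub>R iter_pderiv (E k) f x)"
        unfolding KE \<beta>_def monomial_mult[symmetric] coordinate_eq_monomial[of x j]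
        by (simp add: scaleR_add_right scaleR_sum_right scaleR_conv_of_real algebra_simps sum_distrib_left)
      also have "norm \<dots> \<le> norm (monomial \<beta> x *\<^sub>R iter_pderiv ds f x)
                          + (\<Sum>k<K. norm (monomial \<alpha> x *\<^sub>R iter_pderiv (E k) f x))"
        by (intro order_trans[OF norm_triangle_ineq] add_left_mono norm_sum)
      also have "\<dots> \<le> B \<beta> ds + (\<Sum>k<K. B \<alpha> (E k))"
        by (intro add_mono B sum_mono)
      finally show ?thesis .
    qed
    then show ?thesis by blast
  qed
  then show ?thesis
    unfolding schwartz_def bounded_iff monomial_def[symmetric]
    using smooth_on_coordinate_mult[OF smooth] by blast
qed

lemma integral_has_vector_derivative_at_0:
  fixes u :: "real \<Rightarrow> 'a \<Rightarrow> complex"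
  assumes int: "\<And>t. integrable M (u t)" and int1: "integrable M u1" and intG: "integrable M G"
    and bound: "\<And>t y. \<bar>t\<bar> \<le> 1 \<Longrightarrow> y \<in> space M \<Longrightarrow> norm (u t y - u 0 y - t *\<^sub>R u1 y) \<le> t\<^sup>2 * G y"
  shows "((\<lambda>t. \<integral>y. u t y \<partial>M) has_vector_derivative (\<integral>y. u1 y \<partial>M)) (at 0)"
  unfolding has_vector_derivative_def has_derivative_at
proof (intro conjI)
  show "bounded_linear (\<lambda>x. x *\<^sub>R integral\<^sup>L M u1)" by (rule bounded_linear_scaleR_left)
  let ?I = "\<lambda>t. \<integral>y. u t y \<partial>M"
  have "norm (?I t - ?I 0 - t *\<^sub>R integral\<^sup>L M u1) / norm t \<le> \<bar>t\<bar> * (\<integral>y. G y \<partial>M)"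
    if "\<bar>t\<bar> \<le> 1" for t :: real
  proof -
    have "?I t - ?I 0 - t *\<^sub>R integral\<^sup>L M u1 = (\<integral>y. u t y - u 0 y - t *\<^sub>R u1 y \<partial>M)"
      using int int1 by simp
    also have "norm \<dots> \<le> (\<integral>y. norm (u t y - u 0 y - t *\<^sub>R u1 y) \<partial>M)"
      by (rule integral_norm_bound)
    also have "\<dots> \<le> (\<integral>y. t\<^sup>2 * G y \<partial>M)"
      by (rule integral_mono) (use int int1 intG bound that in auto)
    finally have "norm (?I t - ?I 0 - t *\<^sub>R integral\<^sup>L M u1) \<le> \<bar>t\<bar> * (\<bar>t\<bar> * (\<integral>y. G y \<partial>M))"
      by (simp add: power2_eq_square)
    then show ?thesis
      by (cases "t = 0") (auto simp: divide_simps mult.commute)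
  qed
  moreover have "eventually (\<lambda>t. t \<in> ball 0 1) (at (0::real))"
    by (rule eventually_at_in_open') auto
  ultimately have "\<forall>\<^sub>F t in at 0.
      norm (norm (?I (0 + t) - ?I 0 - t *\<^sub>R integral\<^sup>L M u1) / norm t) \<le> \<bar>t\<bar> * (\<integral>y. G y \<partial>M)"
    by (auto elim!: eventually_mono)
  moreover have "((\<lambda>t. \<bar>t\<bar> * (\<integral>y. G y \<partial>M)) \<longlongrightarrow> 0) (at 0)"
    by (auto intro!: tendsto_eq_intros)
  ultimately show "(\<lambda>t. norm (?I (0 + t) - ?I 0 - t *\<^sub>R integral\<^sup>L M u1) / norm t) \<midarrow>0\<rightarrow> 0"
    by (rule Lim_null_comparison)
qed

lemma norm_diff_le_vector_derivative_bound:
  fixes \<phi> :: "real \<Rightarrow> 'b::real_normed_vector"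
  assumes "\<And>s. s \<in> closed_segment 0 t \<Longrightarrow> (\<phi> has_vector_derivative \<phi>' s) (at s)"
    and "\<And>s. s \<in> closed_segment 0 t \<Longrightarrow> norm (\<phi>' s) \<le> B"
  shows "norm (\<phi> t - \<phi> 0) \<le> B * \<bar>t\<bar>"
proof -
  have "norm (\<phi> t - \<phi> 0) \<le> B * norm (t - 0)"
  proof (rule differentiable_bound[where f' = "\<lambda>s h. h *\<^sub>R \<phi>' s"])
    fix s assume s: "s \<in> closed_segment 0 t"
    show "(\<phi> has_derivative (\<lambda>h. h *\<^sub>R \<phi>' s)) (at s within closed_segment 0 t)"
      using assms(1)[OF s] unfolding has_vector_derivative_def by (rule has_derivative_at_withinI)
    show "onorm (\<lambda>h. h *\<^sub>R \<phi>' s) \<le> B"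
      using assms(2)[OF s] by (simp add: onorm_scaleR_left[OF bounded_linear_ident] onorm_id)
  qed auto
  then show ?thesis by simp
qed

lemma abs_le_if_in_closed_segment_0: "s \<in> closed_segment 0 (t::real) \<Longrightarrow> \<bar>s\<bar> \<le> \<bar>t\<bar>"
  by (auto simp: closed_segment_eq_real_ivl split: if_splits)

lemma norm_taylor_remainder_2_le:
  fixes \<phi> :: "real \<Rightarrow> 'b::real_normed_vector"
  assumes d1: "\<And>s. \<bar>s\<bar> \<le> 1 \<Longrightarrow> (\<phi> has_vector_derivative \<phi>1 s) (at s)"
    and d2: "\<And>s. \<bar>s\<bar> \<le> 1 \<Longrightarrow> (\<phi>1 has_vector_derivative \<phi>2 s) (at s)"
    and b2: "\<And>s. \<bar>s\<bar> \<le> 1 \<Longrightarrow> norm (\<phi>2 s) \<le> B"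
    and t: "\<bar>t\<bar> \<le> 1"
  shows "norm (\<phi> t - \<phi> 0 - t *\<^sub>R \<phi>1 0) \<le> t\<^sup>2 * B"
proof -
  have in_unit: "s \<in> closed_segment 0 t \<Longrightarrow> \<bar>s\<bar> \<le> 1" for s
    using abs_le_if_in_closed_segment_0[of s t] t by simp
  have "0 \<le> B" using b2[of 0] norm_ge_zero[of "\<phi>2 0"] by linarith
  have "norm ((\<lambda>s. \<phi> s - s *\<^sub>R \<phi>1 0) t - (\<lambda>s. \<phi> s - s *\<^sub>R \<phi>1 0) 0) \<le> (\<bar>t\<bar> * B) * \<bar>t\<bar>"
  proof (rule norm_diff_le_vector_derivative_bound[where \<phi>' = "\<lambda>s. \<phi>1 s - \<phi>1 0"])
    fix s assume s: "s \<in> closed_segment 0 t"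
    show "((\<lambda>s. \<phi> s - s *\<^sub>R \<phi>1 0) has_vector_derivative \<phi>1 s - \<phi>1 0) (at s)"
      using d1[OF in_unit[OF s]] by (auto intro!: derivative_eq_intros)
    have "norm (\<phi>1 s - \<phi>1 0) \<le> B * \<bar>s\<bar>"
    proof (rule norm_diff_le_vector_derivative_bound[where \<phi>' = \<phi>2])
      fix r assume r: "r \<in> closed_segment 0 s"
      have "\<bar>r\<bar> \<le> 1" using abs_le_if_in_closed_segment_0[OF r] in_unit[OF s] by simp
      then show "(\<phi>1 has_vector_derivative \<phi>2 r) (at r)" "norm (\<phi>2 r) \<le> B"
        using d2 b2 by auto
    qed
    also have "\<dots> \<le> \<bar>t\<bar> * B"
      using \<open>0 \<le> B\<close> abs_le_if_in_closed_segment_0[OF s] by (simp add: mult.commute mult_left_mono)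
    finally show "norm (\<phi>1 s - \<phi>1 0 ) \<le> \<bar>t\<bar> * B" .
  qed
  moreover have "(\<lambda>s. \<phi> s - s *\<^sub>R \<phi>1 0) t - (\<lambda>s. \<phi> s - s *\<^sub>R \<phi>1 0) 0 = \<phi> t - \<phi> 0 - t *\<^sub>R \<phi>1 0"
    by (simp add: diff_right_commute)
  moreover have "(\<bar>t\<bar> * B) * \<bar>t\<bar> = t\<^sup>2 * B"
    by (metis abs_mult_self_eq mult.commute mult.left_commute power2_eq_square)
  ultimately show ?thesis by metis
qed

lemma norm_iexp_diff_le: "norm (iexp a - iexp b) \<le> \<bar>a - b\<bar>"
proof -
  have "iexp b * iexp (a - b) = iexp a"
    by (simp flip: exp_add add: algebra_simps)
  then have "iexp a - iexp b = iexp b * (iexp (a - b) - 1)"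
    by (simp only: right_diff_distrib mult_1_right)
  also have "norm \<dots> = norm (iexp (a - b) - 1)" by (simp add: norm_mult)
  also have "\<dots> \<le> \<bar>a - b\<bar>" using iexp_approx1[of "a - b" 0] by simp
  finally show ?thesis .
qed

lemma norm_iexp_taylor_1_le: "norm (iexp a - 1 - \<i> * complex_of_real a) \<le> a\<^sup>2 / 2"
  using iexp_approx1[of a 1] by (simp add: power2_eq_square diff_diff_eq)

lemma lborel_integrable_translate:
  fixes g :: "real^'n::finite \<Rightarrow> complex"
  assumes "integrable lborel g"
  shows "integrable lborel (\<lambda>y. g (y + c))"
proof -
  have [measurable]: "g \<in> borel_measurable borel"
    using borel_measurable_integrable[OF assms] by simp
  have "integrable (distr lborel borel ((+) c)) g"
    using assms by (simp add: lborel_distr_plus)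
  then show ?thesis
    by (subst (asm) integrable_distr_eq) (auto simp: add.commute)
qed

lemma lborel_integral_translate:
  fixes g :: "real^'n::finite \<Rightarrow> complex"
  assumes [measurable]: "g \<in> borel_measurable borel"
  shows "(\<integral>y. g (y + c) \<partial>lborel) = (\<integral>y. g y \<partial>lborel)"
proof -
  have "(\<integral>y. g y \<partial>lborel) = (\<integral>y. g y \<partial>(distr lborel borel ((+) c)))"
    by (simp add: lborel_distr_plus)
  also have "\<dots> = (\<integral>y. g (c + y) \<partial>lborel)"
    by (rule integral_distr) auto
  finally show ?thesis by (simp add: add.commute)
qed

section \<open>The Fourier transform of Schwartz functions\<close>

abbreviation fourier_phase :: "real \<Rightarrow> complex" where
  "fourier_phase s \<equiv> exp (- (2 * pi * \<i>) * complex_of_real s)"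

lemma fourier_phase_eq_iexp: "fourier_phase s = iexp (- (2 * pi * s))"
  by (simp add: algebra_simps)

lemma fourier_phase_add: "fourier_phase (a + b) = fourier_phase a * fourier_phase b"
  by (simp only: of_real_add distrib_left exp_add)

lemma integrable_fourier_integrand:
  fixes g :: "real^'n::finite \<Rightarrow> complex"
  assumes "integrable lborel g"
  shows "integrable lborel (\<lambda>y. fourier_phase (x \<bullet> y) * g y)"
proof (rule Bochner_Integration.integrable_bound[where f="\<lambda>y. norm (g y)"])
  show "integrable lborel (\<lambda>y. norm (g y))" using assms by (rule integrable_norm)
  have [measurable]: "g \<in> borel_measurable lborel" using assms by (rule borel_measurable_integrable)
  show "(\<lambda>y. fourier_phase (x \<bullet> y) * g y) \<in> borel_measurable lborel"
    by measurable
qed (simp add: norm_mult)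

lemma norm_fourier_fun_le: "norm (fourier_fun g x) \<le> (\<integral>y. norm (g y) \<partial>lborel)"
proof -
  have "norm (fourier_fun g x) \<le> (\<integral>y. norm (fourier_phase (x \<bullet> y) * g y) \<partial>lborel)"
    unfolding fourier_fun_def by (rule integral_norm_bound)
  then show ?thesis by (simp add: norm_mult)
qed

lemma norm_fourier_phase_diff_le:
  fixes x z y :: "real^'n::finite"
  shows "norm (fourier_phase (x \<bullet> y) - fourier_phase (z \<bullet> y)) \<le> 2 * pi * dist x z * (\<Sum>i\<in>UNIV. \<bar>y $ i\<bar>)"
proof -
  have "norm (fourier_phase (x \<bullet> y) - fourier_phase (z \<bullet> y))
          \<le> \<bar>(-(2 * pi * (x \<bullet> y))) - (-(2 * pi * (z \<bullet> y)))\<bar>"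
    unfolding fourier_phase_eq_iexp by (rule norm_iexp_diff_le)
  also have "(-(2 * pi * (x \<bullet> y))) - (-(2 * pi * (z \<bullet> y))) = -(2 * pi * ((x - z) \<bullet> y))"
    by (simp add: inner_diff_left algebra_simps)
  also have "\<bar>-(2 * pi * ((x - z) \<bullet> y))\<bar> = 2 * pi * \<bar>(x - z) \<bullet> y\<bar>"
    by (simp add: abs_mult)
  also have "\<bar>(x - z) \<bullet> y\<bar> \<le> dist x z * (\<Sum>i\<in>UNIV. \<bar>y $ i\<bar>)"
    using Cauchy_Schwarz_ineq2[of "x - z" y] norm_le_l1_cart[of y] unfolding dist_norm
    by (meson norm_ge_zero mult_left_mono order_trans)
  finally show ?thesis by (simp add: mult.assoc)
qed

lemma continuous_on_fourier_fun:
  fixes g :: "real^'n::finite \<Rightarrow> complex"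
  assumes "rapid_decay g"
  shows "continuous_on UNIV (fourier_fun g)"
proof -
  define G where "G y = 2 * pi * (\<Sum>i\<in>UNIV. norm (complex_of_real (y $ i) * g y))" for y :: "real^'n"
  have "integrable lborel (\<lambda>y. norm (complex_of_real (y $ i) * g y))" for i
    by (intro integrable_norm integrable_rapid_decay rapid_decay_coordinate_mult assms)
  then have integrable_G: "integrable lborel G"
    unfolding G_def by (intro integrable_mult_right integrable_sum) auto
  have "(\<integral>y. G y \<partial>lborel)-lipschitz_on UNIV (fourier_fun g)"
  proof (rule lipschitz_onI)
    show "0 \<le> (\<integral>y. G y \<partial>lborel)"
      unfolding G_def by (intro integral_nonneg_AE AE_I2 mult_nonneg_nonneg sum_nonneg) auto
    fix x z :: "real^'n"
    have "fourier_fun g x - fourier_fun g z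
            = (\<integral>y. (fourier_phase (x \<bullet> y) - fourier_phase (z \<bullet> y)) * g y \<partial>lborel)"
      unfolding fourier_fun_def
      using integrable_fourier_integrand[OF integrable_rapid_decay[OF assms]]
      by (simp add: left_diff_distrib)
    also have "norm \<dots> \<le> (\<integral>y. dist x z * G y \<partial>lborel)"
    proof (rule Bochner_Integration.integral_norm_bound_integral)
      show "integrable lborel (\<lambda>y. (fourier_phase (x \<bullet> y) - fourier_phase (z \<bullet> y)) * g y)"
        unfolding left_diff_distrib
        by (intro Bochner_Integration.integrable_diff integrable_fourier_integrand
            integrable_rapid_decay assms)
      show "integrable lborel (\<lambda>y. dist x z * G y)"
        using integrable_G by simp
      fix y
      have "norm ((fourier_phase (x \<bullet> y) - fourier_phase (z \<bullet> y)) * g y)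
              \<le> 2 * pi * dist x z * (\<Sum>i\<in>UNIV. \<bar>y $ i\<bar>) * norm (g y)"
        unfolding norm_mult by (intro mult_right_mono norm_fourier_phase_diff_le) simp
      also have "\<dots> = dist x z * G y"
        unfolding G_def by (simp add: norm_mult sum_distrib_left sum_distrib_right algebra_simps)
      finally show "norm ((fourier_phase (x \<bullet> y) - fourier_phase (z \<bullet> y)) * g y) \<le> dist x z * G y" .
    qed
    finally show "dist (fourier_fun g x) (fourier_fun g z) \<le> (\<integral>y. G y \<partial>lborel) * dist x z"
      by (simp add: dist_norm mult.commute)
  qed
  then show ?thesis by (rule lipschitz_on_continuous_on)
qed

text \<open>Multiplication by \<open>-2\<pi>i y\<^sub>j\<close>, which the Fourier transform turns into \<open>\<partial>\<^sub>j\<close>.\<close>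
definition fourier_dual_pderiv :: "'n::finite \<Rightarrow> (real^'n \<Rightarrow> complex) \<Rightarrow> real^'n \<Rightarrow> complex" where
  "fourier_dual_pderiv j g = (\<lambda>y. (- (2 * pi * \<i>)) * (complex_of_real (y $ j) * g y))"

lemma rapid_decay_fourier_dual_pderiv: "rapid_decay g \<Longrightarrow> rapid_decay (fourier_dual_pderiv j g)"
  unfolding fourier_dual_pderiv_def by (intro rapid_decay_cmult rapid_decay_coordinate_mult)

lemma schwartz_fourier_dual_pderiv: "schwartz g \<Longrightarrow> schwartz (fourier_dual_pderiv j g)"
  unfolding fourier_dual_pderiv_def by (intro schwartz_cmult schwartz_coordinate_mult)

lemma has_vector_derivative_fourier_fun:
  fixes g :: "real^'n::finite \<Rightarrow> complex"
  assumes "rapid_decay g"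
  shows "((\<lambda>t. fourier_fun g (x + t *\<^sub>R axis j 1)) has_vector_derivative
            fourier_fun (fourier_dual_pderiv j g) x) (at 0)"
  unfolding fourier_fun_def
proof (rule integral_has_vector_derivative_at_0)
  show "integrable lborel (\<lambda>y. fourier_phase ((x + t *\<^sub>R axis j 1) \<bullet> y) * g y)" for t
    by (rule integrable_fourier_integrand[OF integrable_rapid_decay[OF assms]])
  show "integrable lborel (\<lambda>y. fourier_phase (x \<bullet> y) * fourier_dual_pderiv j g y)"
    by (rule integrable_fourier_integrand[OF integrable_rapid_decay[OF rapid_decay_fourier_dual_pderiv[OF assms]]])
  show "integrable lborel (\<lambda>y. 2 * pi\<^sup>2 * norm (complex_of_real (y $ j) * (complex_of_real (y $ j) * g y)))"
    by (intro integrable_mult_right integrable_norm integrable_rapid_decay rapid_decay_coordinate_mult assms)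
  fix t :: real and y :: "real^'n"
  define \<theta> where "\<theta> = -(2 * pi * t * y $ j)"
  have "fourier_phase ((x + t *\<^sub>R axis j 1) \<bullet> y) = fourier_phase (x \<bullet> y) * iexp \<theta>"
    unfolding \<theta>_def inner_add_left fourier_phase_add
    by (simp add: inner_axis' fourier_phase_eq_iexp algebra_simps)
  then have "fourier_phase ((x + t *\<^sub>R axis j 1) \<bullet> y) * g y - fourier_phase ((x + 0 *\<^sub>R axis j 1) \<bullet> y) * g y
               - t *\<^sub>R (fourier_phase (x \<bullet> y) * fourier_dual_pderiv j g y)
        = fourier_phase (x \<bullet> y) * g y * (iexp \<theta> - 1 - \<i> * complex_of_real \<theta>)"
    unfolding fourier_dual_pderiv_def \<theta>_def by (simp add: algebra_simps scaleR_conv_of_real)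
  also have "norm \<dots> = norm (g y) * norm (iexp \<theta> - 1 - \<i> * complex_of_real \<theta>)"
    by (simp add: norm_mult)
  also have "\<dots> \<le> norm (g y) * (\<theta>\<^sup>2 / 2)"
    by (intro mult_left_mono norm_iexp_taylor_1_le) simp
  also have "\<dots> = t\<^sup>2 * (2 * pi\<^sup>2 * norm (complex_of_real (y $ j) * (complex_of_real (y $ j) * g y)))"
    unfolding \<theta>_def by (simp add: norm_mult power2_eq_square algebra_simps)
  finally show "norm (fourier_phase ((x + t *\<^sub>R axis j 1) \<bullet> y) * g y - fourier_phase ((x + 0 *\<^sub>R axis j 1) \<bullet> y) * g y
               - t *\<^sub>R (fourier_phase (x \<bullet> y) * fourier_dual_pderiv j g y))
        \<le> t\<^sup>2 * (2 * pi\<^sup>2 * norm (complex_of_real (y $ j) * (complex_of_real (y $ j) * g y)))" .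
qed

lemma pderiv_dir_fourier_fun:
  assumes "rapid_decay g"
  shows "pderiv_dir j (fourier_fun g) = fourier_fun (fourier_dual_pderiv j g)"
  by (rule pderiv_dir_eqI) (rule has_vector_derivative_fourier_fun[OF assms])

lemma fourier_fun_translate:
  fixes g :: "real^'n::finite \<Rightarrow> complex"
  assumes [measurable]: "g \<in> borel_measurable borel"
  shows "fourier_fun (\<lambda>y. g (y + v)) x = fourier_phase (- (x \<bullet> v)) * fourier_fun g x"
proof -
  have "fourier_fun (\<lambda>y. g (y + v)) x = (\<integral>y. (\<lambda>z. fourier_phase (x \<bullet> (z - v)) * g z) (y + v) \<partial>lborel)"
    unfolding fourier_fun_def by simp
  also have "\<dots> = (\<integral>z. fourier_phase (x \<bullet> (z - v)) * g z \<partial>lborel)"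
    by (rule lborel_integral_translate) measurable
  also have "\<dots> = (\<integral>z. fourier_phase (- (x \<bullet> v)) * (fourier_phase (x \<bullet> z) * g z) \<partial>lborel)"
  proof (rule Bochner_Integration.integral_cong[OF refl])
    fix z
    have "x \<bullet> (z - v) = - (x \<bullet> v) + x \<bullet> z" by (simp add: inner_diff_right)
    then show "fourier_phase (x \<bullet> (z - v)) * g z = fourier_phase (- (x \<bullet> v)) * (fourier_phase (x \<bullet> z) * g z)"
      by (simp only: fourier_phase_add mult.assoc)
  qed
  also have "\<dots> = fourier_phase (- (x \<bullet> v)) * fourier_fun g x"
    unfolding fourier_fun_def by simp
  finally show ?thesis .
qed

lemma schwartz_translate_remainder_le:
  fixes f :: "real^'n::finite \<Rightarrow> complex"
  assumes "schwartz f"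
  obtains C where "\<And>t y. \<bar>t\<bar> \<le> 1 \<Longrightarrow>
    norm (f (y + t *\<^sub>R axis j 1) - f y - t *\<^sub>R pderiv_dir j f y) \<le> t\<^sup>2 * (C * cauchy_weight y)"
proof -
  have smooth: "smooth_on UNIV f" using assms by (rule schwartz_smooth)
  obtain C where C: "\<And>z. norm (pderiv_dir j (pderiv_dir j f) z) \<le> C * cauchy_weight z"
    using rapid_decay_le_cauchy_weight[OF schwartz_rapid_decay[OF
          schwartz_pderiv_dir[OF schwartz_pderiv_dir[OF assms]]]] by blast
  have "0 \<le> C * cauchy_weight (0::real^'n)"
    using C[of 0] norm_ge_zero order_trans by blast
  then have "0 \<le> C" using cauchy_weight_pos[of "0::real^'n"] by (simp add: zero_le_mult_iff)
  have "norm ((\<lambda>s. f (y + s *\<^sub>R axis j 1)) t - (\<lambda>s. f (y + s *\<^sub>R axis j 1)) 0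
              - t *\<^sub>R (\<lambda>s. pderiv_dir j f (y + s *\<^sub>R axis j 1)) 0) \<le> t\<^sup>2 * (3 * C * cauchy_weight y)"
    if "\<bar>t\<bar> \<le> 1" for t y
  proof (rule norm_taylor_remainder_2_le)
    show "((\<lambda>s. f (y + s *\<^sub>R axis j 1)) has_vector_derivative pderiv_dir j f (y + s *\<^sub>R axis j 1)) (at s)"
      for s by (rule smooth_on_UNIV_has_vector_derivative[OF smooth])
    show "((\<lambda>s. pderiv_dir j f (y + s *\<^sub>R axis j 1)) has_vector_derivative
            pderiv_dir j (pderiv_dir j f) (y + s *\<^sub>R axis j 1)) (at s)" for s
      by (rule smooth_on_UNIV_has_vector_derivative[OF smooth_on_pderiv_dir[OF smooth]])
    show "norm (pderiv_dir j (pderiv_dir j f) (y + s *\<^sub>R axis j 1)) \<le> 3 * C * cauchy_weight y"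
      if "\<bar>s\<bar> \<le> 1" for s
      using order_trans[OF C mult_left_mono[OF cauchy_weight_translate_le[OF that] \<open>0 \<le> C\<close>]]
      by (simp add: mult_ac)
  qed (use that in auto)
  then show ?thesis
    using that[of "3 * C"] by (simp add: mult.assoc)
qed

lemma has_vector_derivative_fourier_fun_translate:
  fixes f :: "real^'n::finite \<Rightarrow> complex"
  assumes "schwartz f"
  shows "((\<lambda>t. fourier_fun (\<lambda>y. f (y + t *\<^sub>R axis j 1)) x) has_vector_derivative
            fourier_fun (pderiv_dir j f) x) (at 0)"
proof -
  obtain C where C: "\<And>t y. \<bar>t\<bar> \<le> 1 \<Longrightarrow>
      norm (f (y + t *\<^sub>R axis j 1) - f y - t *\<^sub>R pderiv_dir j f y) \<le> t\<^sup>2 * (C * cauchy_weight y)"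
    using schwartz_translate_remainder_le[OF assms] by blast
  show ?thesis
    unfolding fourier_fun_def
  proof (rule integral_has_vector_derivative_at_0[where G = "\<lambda>y. C * cauchy_weight y"])
    show "integrable lborel (\<lambda>y. fourier_phase (x \<bullet> y) * f (y + t *\<^sub>R axis j 1))" for t
      by (intro integrable_fourier_integrand lborel_integrable_translate
          integrable_rapid_decay schwartz_rapid_decay assms)
    show "integrable lborel (\<lambda>y. fourier_phase (x \<bullet> y) * pderiv_dir j f y)"
      by (intro integrable_fourier_integrand integrable_rapid_decay schwartz_rapid_decay
          schwartz_pderiv_dir assms)
    show "integrable lborel (\<lambda>y. C * cauchy_weight y)"
      by (intro integrable_mult_right integrable_cauchy_weight)
    fix t :: real and y :: "real^'n"
    assume "\<bar>t\<bar> \<le> 1"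
    have "fourier_phase (x \<bullet> y) * f (y + t *\<^sub>R axis j 1) - fourier_phase (x \<bullet> y) * f (y + 0 *\<^sub>R axis j 1)
            - t *\<^sub>R (fourier_phase (x \<bullet> y) * pderiv_dir j f y)
          = fourier_phase (x \<bullet> y) * (f (y + t *\<^sub>R axis j 1) - f y - t *\<^sub>R pderiv_dir j f y)"
      by (simp add: algebra_simps scaleR_conv_of_real)
    then show "norm (fourier_phase (x \<bullet> y) * f (y + t *\<^sub>R axis j 1) - fourier_phase (x \<bullet> y) * f (y + 0 *\<^sub>R axis j 1)
                - t *\<^sub>R (fourier_phase (x \<bullet> y) * pderiv_dir j f y)) \<le> t\<^sup>2 * (C * cauchy_weight y)"
      using C[OF \<open>\<bar>t\<bar> \<le> 1\<close>] by (simp add: norm_mult)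
  qed
qed

text \<open>Integration by parts, obtained by differentiating the translation formula.\<close>
lemma fourier_fun_pderiv_dir:
  fixes f :: "real^'n::finite \<Rightarrow> complex"
  assumes "schwartz f"
  shows "fourier_fun (pderiv_dir j f) x = (2 * pi * \<i> * complex_of_real (x $ j)) * fourier_fun f x"
proof (rule vector_derivative_unique_at[OF has_vector_derivative_fourier_fun_translate[OF assms]])
  have "f \<in> borel_measurable borel"
    using assms by (intro rapid_decay_measurable schwartz_rapid_decay)
  then have translate: "fourier_fun (\<lambda>y. f (y + t *\<^sub>R axis j 1)) x = iexp (2 * pi * x $ j * t) * fourier_fun f x"
    for t
    by (simp add: fourier_fun_translate inner_axis fourier_phase_eq_iexp mult_ac)
  have "((\<lambda>t. 2 * pi * x $ j * t) has_vector_derivative 2 * pi * x $ j) (at 0)"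
    by (auto intro!: derivative_eq_intros)
  from vector_diff_chain_at[OF this has_vector_derivative_iexp]
  have "((\<lambda>t. iexp (2 * pi * x $ j * t)) has_vector_derivative (2 * pi * \<i> * complex_of_real (x $ j))) (at 0)"
    by (simp add: o_def scaleR_conv_of_real algebra_simps)
  from has_vector_derivative_mult_left[OF this]
  show "((\<lambda>t. fourier_fun (\<lambda>y. f (y + t *\<^sub>R axis j 1)) x) has_vector_derivative
          (2 * pi * \<i> * complex_of_real (x $ j)) * fourier_fun f x) (at 0)"
    unfolding translate .
qed

lemma fourier_fun_iter_pderiv:
  fixes f :: "real^'n::finite \<Rightarrow> complex"
  assumes "schwartz f"
  shows "fourier_fun (iter_pderiv ds f) x
           = prod_list (map (\<lambda>d. 2 * pi * \<i> * complex_of_real (x $ d)) ds) * fourier_fun f x"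
  using assms
proof (induction ds arbitrary: f)
  case Nil then show ?case by simp
next
  case (Cons d ds)
  then show ?case
    by (simp add: iter_pderiv_Cons schwartz_pderiv_dir fourier_fun_pderiv_dir)
qed

lemma prod_list_map_eq_prod_count_list:
  "prod_list (map g ds) = (\<Prod>i\<in>UNIV. g i ^ count_list ds i)" for g :: "'a::finite \<Rightarrow> 'b::comm_monoid_mult"
proof (induction ds)
  case Nil then show ?case by simp
next
  case (Cons d ds)
  have "(\<Prod>i\<in>UNIV. g i ^ count_list (d # ds) i) = (\<Prod>i\<in>UNIV. g i ^ count_list ds i * (if d = i then g i else 1))"
    by (intro prod.cong) (auto simp: power_commutes)
  also have "\<dots> = (\<Prod>i\<in>UNIV. g i ^ count_list ds i) * g d"
    by (simp add: prod.distrib power_commutes)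
  finally show ?case using Cons by (simp add: mult.commute)
qed

lemma ex_count_list_eq: "\<exists>ds::'a::finite list. \<forall>i. count_list ds i = \<alpha> i"
proof -
  obtain ds where "mset ds = Abs_multiset \<alpha>" using ex_mset by blast
  then have "count_list ds i = \<alpha> i" for i
    by (metis count_Abs_multiset count_mset finite)
  then show ?thesis by blast
qed

lemma fourier_fun_monomial_mult_bounded:
  fixes f :: "real^'n::finite \<Rightarrow> complex"
  assumes "schwartz f"
  shows "\<exists>B. \<forall>x. norm (monomial \<alpha> x *\<^sub>R fourier_fun f x) \<le> B"
proof -
  obtain ds where ds: "\<And>i. count_list ds i = \<alpha> i" using ex_count_list_eq by blast
  define K where "K = (\<Prod>i\<in>UNIV. (2 * pi * \<i>) ^ \<alpha> i)"
  have "norm K > 0" unfolding K_def by (simp add: prod_zero_iff)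
  have "norm K * norm (monomial \<alpha> x *\<^sub>R fourier_fun f x) = norm (fourier_fun (iter_pderiv ds f) x)" for x
  proof -
    have "prod_list (map (\<lambda>d. 2 * pi * \<i> * complex_of_real (x $ d)) ds) = K * complex_of_real (monomial \<alpha> x)"
      unfolding K_def monomial_def prod_list_map_eq_prod_count_list ds
      by (simp add: power_mult_distrib prod.distrib)
    then show ?thesis
      by (simp add: fourier_fun_iter_pderiv[OF assms] scaleR_conv_of_real norm_mult)
  qed
  also have "norm (fourier_fun (iter_pderiv ds f) x) \<le> (\<integral>y. norm (iter_pderiv ds f y) \<partial>lborel)" for x
    by (rule norm_fourier_fun_le)
  finally show ?thesis
    using \<open>norm K > 0\<close> by (metis mult.commute pos_le_divide_eq)
qed

lemma iter_pderiv_fourier_fun: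
  fixes f :: "real^'n::finite \<Rightarrow> complex"
  assumes "schwartz f"
  shows "iter_pderiv ds (fourier_fun f) = fourier_fun (fold fourier_dual_pderiv ds f)
           \<and> schwartz (fold fourier_dual_pderiv ds f)"
  using assms
proof (induction ds arbitrary: f)
  case Nil then show ?case by simp
next
  case (Cons d ds)
  then show ?case
    by (simp add: iter_pderiv_Cons pderiv_dir_fourier_fun schwartz_rapid_decay schwartz_fourier_dual_pderiv)
qed

lemma schwartz_fourier_fun:
  fixes f :: "real^'n::finite \<Rightarrow> complex"
  assumes "schwartz f"
  shows "schwartz (fourier_fun f)"
proof -
  have derivs: "iter_pderiv ds (fourier_fun f) = fourier_fun (fold fourier_dual_pderiv ds f)"
    and schwartz_derivs: "schwartz (fold fourier_dual_pderiv ds f)" for ds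
    using iter_pderiv_fourier_fun[OF assms] by auto
  have "smooth_on UNIV (fourier_fun f)"
    unfolding smooth_on_def derivs
    by (intro allI conjI ballI continuous_on_fourier_fun schwartz_rapid_decay schwartz_derivs
        differentiableI_vector[OF has_vector_derivative_fourier_fun])
  then show ?thesis
    unfolding schwartz_def derivs bounded_iff monomial_def[symmetric]
    using fourier_fun_monomial_mult_bounded[OF schwartz_derivs] by blast
qed

section \<open>Blow-ups tested against Fourier transforms\<close>

lemma integral_fourier_phase_blowup:
  "(\<integral>y. fourier_phase (((1 / r) *\<^sub>R (y - x)) \<bullet> \<xi>) * h y $ j \<partial>M)
     = fourier_phase (- (((1 / r) *\<^sub>R \<xi>) \<bullet> x)) * fourier_meas M h ((1 / r) *\<^sub>R \<xi>) $ j"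
proof -
  have "((1 / r) *\<^sub>R (y - x)) \<bullet> \<xi> = - (((1 / r) *\<^sub>R \<xi>) \<bullet> x) + ((1 / r) *\<^sub>R \<xi>) \<bullet> y" for y
    by (simp add: inner_diff_left inner_diff_right inner_commute diff_divide_distrib)
  then have "fourier_phase (((1 / r) *\<^sub>R (y - x)) \<bullet> \<xi>) * h y $ j
               = fourier_phase (- (((1 / r) *\<^sub>R \<xi>) \<bullet> x)) * (fourier_phase (((1 / r) *\<^sub>R \<xi>) \<bullet> y) * h y $ j)"
    for y by (simp only: fourier_phase_add mult.assoc)
  then have "(\<integral>y. fourier_phase (((1 / r) *\<^sub>R (y - x)) \<bullet> \<xi>) * h y $ j \<partial>M)
      = fourier_phase (- (((1 / r) *\<^sub>R \<xi>) \<bullet> x)) * (\<integral>y. fourier_phase (((1 / r) *\<^sub>R \<xi>) \<bullet> y) * h y $ j \<partial>M)"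
    by (simp only: integral_mult_right_zero)
  then show ?thesis
    unfolding fourier_meas_def by simp
qed

lemma measurable_blowup_kernel:
  fixes f :: "real^'n::finite \<Rightarrow> complex"
  assumes sets_M: "sets M = sets borel"
    and "f \<in> borel_measurable lborel" and "(\<lambda>y. h y $ j) \<in> borel_measurable M"
  shows "(\<lambda>(y, \<xi>). fourier_phase (((1 / r) *\<^sub>R (y - x)) \<bullet> \<xi>) * f \<xi> * h y $ j)
           \<in> borel_measurable (M \<Otimes>\<^sub>M lborel)"
proof -
  have sets_P: "sets (M \<Otimes>\<^sub>M (lborel :: (real^'n) measure)) = sets (borel :: ((real^'n) \<times> (real^'n)) measure)"
    by (subst borel_prod[symmetric]) (rule sets_pair_measure_cong[OF sets_M sets_lborel])
  have "(\<lambda>p. fourier_phase (((1 / r) *\<^sub>R (fst p - x)) \<bullet> snd p)) \<in> borel_measurable (M \<Otimes>\<^sub>M lborel)"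
    unfolding measurable_cong_sets[OF sets_P refl]
    by (intro borel_measurable_continuous_onI continuous_intros)
  moreover have "(\<lambda>p. f (snd p)) \<in> borel_measurable (M \<Otimes>\<^sub>M lborel)"
    by (rule measurable_compose[OF measurable_snd assms(2)])
  moreover have "(\<lambda>p. h (fst p) $ j) \<in> borel_measurable (M \<Otimes>\<^sub>M lborel)"
    by (rule measurable_compose[OF measurable_fst assms(3)])
  ultimately show ?thesis
    unfolding case_prod_beta' by (intro borel_measurable_times)
qed

lemma has_bochner_integral_blowup_int_fourier_fun:
  fixes f :: "real^'n::finite \<Rightarrow> complex" and h :: "real^'n \<Rightarrow> complex^'m::finite"
  assumes "finite_vec_measure M h" and f: "integrable lborel f"
  shows "has_bochner_integral lborel
           (\<lambda>\<xi>. f \<xi> * (fourier_phase (- (((1 / r) *\<^sub>R \<xi>) \<bullet> x)) * fourier_meas M h ((1 / r) *\<^sub>R \<xi>) $ j))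
           (blowup_int M h x r j (fourier_fun f))"
proof -
  have sets_M: "sets M = sets borel" and "finite_measure M" and "integrable M h"
    using assms(1) unfolding finite_vec_measure_def by auto
  interpret M: finite_measure M by fact
  interpret P: pair_sigma_finite M "lborel :: (real^'n) measure"
    by (intro pair_sigma_finite.intro M.sigma_finite_measure_axioms lborel.sigma_finite_measure_axioms)
  have h_j: "integrable M (\<lambda>y. h y $ j)"
    using integrable_bounded_linear[OF bounded_linear_vec_nth \<open>integrable M h\<close>] .
  define K where "K y \<xi> = fourier_phase (((1 / r) *\<^sub>R (y - x)) \<bullet> \<xi>) * f \<xi> * h y $ j"
    for y \<xi> :: "real^'n"
  have K_measurable: "(\<lambda>(y, \<xi>). K y \<xi>) \<in> borel_measurable (M \<Otimes>\<^sub>M lborel)"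
    unfolding K_def using sets_M borel_measurable_integrable[OF f] borel_measurable_integrable[OF h_j]
    by (rule measurable_blowup_kernel)
  have "(\<lambda>y. \<integral>\<xi>. norm (K y \<xi>) \<partial>lborel) = (\<lambda>y. (\<integral>\<xi>. norm (f \<xi>) \<partial>lborel) * norm (h y $ j))"
    unfolding K_def by (simp add: norm_mult)
  then have "integrable M (\<lambda>y. \<integral>\<xi>. norm (K y \<xi>) \<partial>lborel)"
    using h_j by (simp add: integrable_norm)
  moreover have "AE y in M. integrable lborel (\<lambda>\<xi>. K y \<xi>)"
    unfolding K_def
    by (intro AE_I2 integrable_mult_left integrable_fourier_integrand f)
  ultimately have K_integrable: "integrable (M \<Otimes>\<^sub>M lborel) (\<lambda>(y, \<xi>). K y \<xi>)"
    by (intro P.Fubini_integrable[OF K_measurable]) simp_all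
  have "blowup_int M h x r j (fourier_fun f) = (\<integral>y. \<integral>\<xi>. K y \<xi> \<partial>lborel \<partial>M)"
    unfolding blowup_int_def fourier_fun_def K_def
    by (intro Bochner_Integration.integral_cong refl) simp
  also have "\<dots> = (\<integral>\<xi>. \<integral>y. K y \<xi> \<partial>M \<partial>lborel)"
    using P.integral_fst[OF K_integrable] P.integral_snd[OF K_integrable] by simp
  moreover have "(\<integral>y. K y \<xi> \<partial>M)
      = f \<xi> * (fourier_phase (- (((1 / r) *\<^sub>R \<xi>) \<bullet> x)) * fourier_meas M h ((1 / r) *\<^sub>R \<xi>) $ j)" for \<xi>
  proof -
    have "K y \<xi> = f \<xi> * (fourier_phase (((1 / r) *\<^sub>R (y - x)) \<bullet> \<xi>) * h y $ j)" for y
      unfolding K_def by (simp only: mult_ac)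
    then show ?thesis by (simp only: integral_mult_right_zero integral_fourier_phase_blowup)
  qed
  ultimately show ?thesis
    using P.integrable_snd[OF K_integrable] by (simp add: has_bochner_integral_iff)
qed

lemma blowup_int_fourier_fun_sum_eq_0:
  fixes f :: "'m::finite \<Rightarrow> real^'n::finite \<Rightarrow> complex"
  assumes "M_phi \<phi> M h"
    and homogeneous: "\<forall>\<xi> a. \<xi> \<noteq> 0 \<longrightarrow> a > 0 \<longrightarrow> \<phi> (a *\<^sub>R \<xi>) = \<phi> \<xi>"
    and "S_phi_perp \<phi> f" and "r > 0"
  shows "(\<Sum>i\<in>UNIV. blowup_int M h x r i (fourier_fun (f i))) = 0"
proof -
  have perp: "\<And>\<xi> w. \<xi> \<noteq> 0 \<Longrightarrow> w \<in> \<phi> \<xi> \<Longrightarrow> (\<Sum>i\<in>UNIV. f i \<xi> * w $ i) = 0"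
    and integrable_f: "\<And>i. integrable lborel (f i)"
    using \<open>S_phi_perp \<phi> f\<close> unfolding S_phi_perp_def
    by (auto intro: integrable_rapid_decay schwartz_rapid_decay)
  have "finite_vec_measure M h" and in_phi: "\<And>\<xi>. \<xi> \<noteq> 0 \<Longrightarrow> fourier_meas M h \<xi> \<in> \<phi> \<xi>"
    using assms(1) unfolding M_phi_def by auto
  let ?F = "\<lambda>\<xi>. \<Sum>i\<in>UNIV.
             f i \<xi> * (fourier_phase (- (((1 / r) *\<^sub>R \<xi>) \<bullet> x)) * fourier_meas M h ((1 / r) *\<^sub>R \<xi>) $ i)"
  have "has_bochner_integral lborel ?F (\<Sum>i\<in>UNIV. blowup_int M h x r i (fourier_fun (f i)))"
    by (intro has_bochner_integral_sum has_bochner_integral_blowup_int_fourier_fun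
        \<open>finite_vec_measure M h\<close> integrable_f)
  moreover have "?F \<xi> = 0" if "\<xi> \<noteq> 0" for \<xi>
  proof -
    have "fourier_meas M h ((1 / r) *\<^sub>R \<xi>) \<in> \<phi> \<xi>"
      using in_phi[of "(1 / r) *\<^sub>R \<xi>"] homogeneous \<open>r > 0\<close> that by simp
    then have "(\<Sum>i\<in>UNIV. f i \<xi> * fourier_meas M h ((1 / r) *\<^sub>R \<xi>) $ i) = 0"
      using perp[OF that] by blast
    moreover have "?F \<xi> = fourier_phase (- (((1 / r) *\<^sub>R \<xi>) \<bullet> x))
                             * (\<Sum>i\<in>UNIV. f i \<xi> * fourier_meas M h ((1 / r) *\<^sub>R \<xi>) $ i)"
      unfolding sum_distrib_left by (simp add: mult_ac)
    ultimately show ?thesis by simp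
  qed
  then have "(\<integral>\<xi>. ?F \<xi> \<partial>lborel) = 0"
    by (intro integral_eq_zero_AE) (use AE_lborel_singleton[of 0] in \<open>auto elim: eventually_mono\<close>)
  ultimately show ?thesis
    by (simp add: has_bochner_integral_integral_eq)
qed

theorem mainTheorem6:
  fixes \<phi> :: "real^'n::finite \<Rightarrow> (complex^'m::finite) set"
    and M :: "(real^'n) measure" and h :: "real^'n \<Rightarrow> complex^'m"
    and x :: "real^'n"
    and N :: "(real^'n) measure" and g :: "real^'n \<Rightarrow> complex^'m"
    and Lam :: "'m \<Rightarrow> (real^'n \<Rightarrow> complex) \<Rightarrow> complex"
  assumes "smooth_hom_line_bundle \<phi>"
    and "M_phi \<phi> M h"
    and "(N, g, Lam) \<in> Tan_star M h x"
  shows "\<forall>f. S_phi_perp \<phi> f \<longrightarrow> (\<Sum>i\<in>UNIV. Lam i (fourier_fun (f i))) = 0"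
proof (intro allI impI)
  fix f :: "'m \<Rightarrow> real^'n \<Rightarrow> complex"
  assume "S_phi_perp \<phi> f"
  obtain r c :: "nat \<Rightarrow> real" where "\<And>k. r k > 0"
    and conv: "\<And>j \<psi>. schwartz \<psi> \<Longrightarrow>
            (\<lambda>k. complex_of_real (c k) * blowup_int M h x (r k) j \<psi>) \<longlonglongrightarrow> Lam j \<psi>"
    using assms(3) unfolding Tan_star_def by blast
  have "(\<lambda>k. \<Sum>i\<in>UNIV. complex_of_real (c k) * blowup_int M h x (r k) i (fourier_fun (f i)))
        \<longlonglongrightarrow> (\<Sum>i\<in>UNIV. Lam i (fourier_fun (f i)))"
    using \<open>S_phi_perp \<phi> f\<close> unfolding S_phi_perp_def
    by (intro tendsto_sum conv schwartz_fourier_fun) blast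
  moreover have "(\<Sum>i\<in>UNIV. complex_of_real (c k) * blowup_int M h x (r k) i (fourier_fun (f i))) = 0" for k
    using blowup_int_fourier_fun_sum_eq_0[OF assms(2) _ \<open>S_phi_perp \<phi> f\<close> \<open>r k > 0\<close>] assms(1)
    unfolding smooth_hom_line_bundle_def by (simp flip: sum_distrib_left)
  ultimately show "(\<Sum>i\<in>UNIV. Lam i (fourier_fun (f i))) = 0"
    by (simp add: LIMSEQ_const_iff)
qed

end
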